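(* Let $k=1$, $\gamma>0$, $\delta>1$, and $Z=\{(\tau,s)\in\mathcal C:g(\tau,s)=0\}$. (a) If $1<\delta<\Phi$ and $\gamma>M_{\mathcal F}(\delta)/2$, then $Z\cap(\{\tau\}\times S^1)$ has exactly two points for every $\tau\in(0,1)$ and is the single point $(1,3\pi/2)$ for $\tau=1$; moreover all points of $Z\cap(\{\tau\}\times S^1)$ converge to $s=3\pi/2$ as $\tau\to0^+$ (so $Z$ closes up to a contractible closed curve with "fold points" at $\tau=0$ and $\tau=1$). (b) If $1<\delta<\Phi$ and $0<\gamma<M_{\mathcal F}(\delta)/2$, then there are $0<a<b<1$ such that $Z\cap(\{\tau\}\times S^1)$ has exactly two points for $\tau\in(0,a)\cup(b,1)$, is the single point $(\tau,\pi/2)$ for $\tau\in\{a,b\}$, is empty for $\tau\in(a,b)$, and is the single point $(1,3\pi/2)$ for $\tau=1$; $(a,\pi/2)$ is a subcritical and $(b,\pi/2)$ a supercritical fold point, and the points of $Z\cap(\{\tau\}\times S^1)$ converge to $s=3\pi/2$ as $\tau\to0^+$. (c) If $\delta>\Phi$, then there is $\tau_0\in(0,1)$ such that $Z\cap(\{\tau\}\times S^1)$ is empty for $\tau<\tau_0$, is the single point $(\tau_0,\pi/2)$ for $\tau=\tau_0$, has exactly two points for $\tau\in(\tau_0,1)$, and is the single point $(1,3\pi/2)$ for $\tau=1$; $(\tau_0,\pi/2)$ is a supercritical fold point and $(1,3\pi/2)$ is a fold point.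
   Context: Let $S^1=\mathbb R/2\pi\mathbb Z$ and $\mathcal C=\{(\tau,s):0<\tau\le1,\ s\in S^1\}$. Let $p(\delta)=-\delta^2+\delta+1$, $\Phi=(1+\sqrt5)/2$. For parameters $\delta>1$, $\gamma>0$, $k>0$ define $g:\mathcal C\to\mathbb R$, $g(\tau,s)=\tau^{\delta^2}+\gamma\tau^{\delta^2-\delta}(1+k\sin s)-\tau$; thus $g(\tau,s)=0$ iff $\gamma(1+k\sin s)=\mathcal F_\delta(\tau)$, where $\mathcal F_\delta(\tau)=\tau^{p(\delta)}-\tau^\delta$. For $1<\delta<\Phi$, $M_{\mathcal F}(\delta)=\max_{(0,1]}\mathcal F_\delta>0$. A fold point is a point $(\tau_0,s_0)\in\mathcal C$ with $g(\tau_0,s_0)=0$ and $\partial g/\partial s(\tau_0,s_0)=0$. It is supercritical if there is a neighbourhood $U$ of $(\tau_0,s_0)$ such that for $\tau>\tau_0$ close to $\tau_0$ the set $\{s:(\tau,s)\in U,\ g(\tau,s)=0\}$ has exactly two elements, for $\tau=\tau_0$ exactly one, and for $\tau<\tau_0$ close to $\tau_0$ none; subcritical if the same holds with the roles of $\tau>\tau_0$ and $\tau<\tau_0$ interchanged. *)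

theory Defs
  imports "HOL-Analysis.Analysis"
begin

text \<open>Points of S^1 = R/2piZ are represented by real numbers; a fibre of the zero
set over tau is represented by its representatives in [0, 2pi).\<close>

definition p_exp :: "real \<Rightarrow> real" where
  "p_exp \<delta> = 1 + \<delta> - \<delta> ^ 2"

definition Phi :: real where
  "Phi = (1 + sqrt 5) / 2"

definition F_fun :: "real \<Rightarrow> real \<Rightarrow> real" where
  "F_fun \<delta> \<tau> = \<tau> powr (p_exp \<delta>) - \<tau> powr \<delta>"

definition M_F :: "real \<Rightarrow> real" where
  "M_F \<delta> = (SUP \<tau>\<in>{0<..1}. F_fun \<delta> \<tau>)"

definition g_fun :: "real \<Rightarrow> real \<Rightarrow> real \<Rightarrow> real \<Rightarrow> real \<Rightarrow> real" where
  "g_fun \<delta> \<gamma> k \<tau> s =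
     \<tau> powr (\<delta> ^ 2) + \<gamma> * \<tau> powr (\<delta> ^ 2 - \<delta>) * (1 + k * sin s) - \<tau>"

definition fibre :: "real \<Rightarrow> real \<Rightarrow> real \<Rightarrow> real \<Rightarrow> real set" where
  "fibre \<delta> \<gamma> k \<tau> = {s \<in> {0..<2*pi}. 0 < \<tau> \<and> \<tau> \<le> 1 \<and> g_fun \<delta> \<gamma> k \<tau> s = 0}"

definition fold_point :: "real \<Rightarrow> real \<Rightarrow> real \<Rightarrow> real \<Rightarrow> real \<Rightarrow> bool" where
  "fold_point \<delta> \<gamma> k \<tau>0 s0 \<longleftrightarrow>
     0 < \<tau>0 \<and> \<tau>0 \<le> 1 \<and> g_fun \<delta> \<gamma> k \<tau>0 s0 = 0 \<and>
     deriv (\<lambda>s. g_fun \<delta> \<gamma> k \<tau>0 s) s0 = 0"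

text \<open>Zeros of g in a neighbourhood U (a lift to R x R of a neighbourhood in the
cylinder; it is required to have s-width less than 2pi so that it projects injectively).\<close>
definition local_zeros :: "real \<Rightarrow> real \<Rightarrow> real \<Rightarrow> (real \<times> real) set \<Rightarrow> real \<Rightarrow> real set" where
  "local_zeros \<delta> \<gamma> k U \<tau> = {s. (\<tau>, s) \<in> U \<and> 0 < \<tau> \<and> \<tau> \<le> 1 \<and> g_fun \<delta> \<gamma> k \<tau> s = 0}"

definition supercritical :: "real \<Rightarrow> real \<Rightarrow> real \<Rightarrow> real \<Rightarrow> real \<Rightarrow> bool" where
  "supercritical \<delta> \<gamma> k \<tau>0 s0 \<longleftrightarrow> fold_point \<delta> \<gamma> k \<tau>0 s0 \<and>
     (\<exists>U. open U \<and> (\<tau>0, s0) \<in> U \<and> (\<forall>(t, s)\<in>U. \<bar>s - s0\<bar> < pi) \<and>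
        (\<exists>\<eta>>0. (\<forall>\<tau>. \<tau>0 < \<tau> \<and> \<tau> < \<tau>0 + \<eta> \<longrightarrow> card (local_zeros \<delta> \<gamma> k U \<tau>) = 2) \<and>
               card (local_zeros \<delta> \<gamma> k U \<tau>0) = 1 \<and>
               (\<forall>\<tau>. \<tau>0 - \<eta> < \<tau> \<and> \<tau> < \<tau>0 \<longrightarrow> local_zeros \<delta> \<gamma> k U \<tau> = {})))"

definition subcritical :: "real \<Rightarrow> real \<Rightarrow> real \<Rightarrow> real \<Rightarrow> real \<Rightarrow> bool" where
  "subcritical \<delta> \<gamma> k \<tau>0 s0 \<longleftrightarrow> fold_point \<delta> \<gamma> k \<tau>0 s0 \<and>
     (\<exists>U. open U \<and> (\<tau>0, s0) \<in> U \<and> (\<forall>(t, s)\<in>U. \<bar>s - s0\<bar> < pi) \<and>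
        (\<exists>\<eta>>0. (\<forall>\<tau>. \<tau>0 - \<eta> < \<tau> \<and> \<tau> < \<tau>0 \<longrightarrow> card (local_zeros \<delta> \<gamma> k U \<tau>) = 2) \<and>
               card (local_zeros \<delta> \<gamma> k U \<tau>0) = 1 \<and>
               (\<forall>\<tau>. \<tau>0 < \<tau> \<and> \<tau> < \<tau>0 + \<eta> \<longrightarrow> local_zeros \<delta> \<gamma> k U \<tau> = {})))"

definition conv_to_3pi2 :: "real \<Rightarrow> real \<Rightarrow> real \<Rightarrow> bool" where
  "conv_to_3pi2 \<delta> \<gamma> k \<longleftrightarrow>
     (\<forall>\<epsilon>>0. \<exists>\<eta>>0. \<forall>\<tau> s. 0 < \<tau> \<and> \<tau> < \<eta> \<and> s \<in> fibre \<delta> \<gamma> k \<tau> \<longrightarrow> \<bar>s - 3*pi/2\<bar> < \<epsilon>)"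

end

theory Submission
  imports Defs
begin

text \<open>For \<tau> > 0 the equation g = 0 is equivalent to sin s = F(\<tau>)/\<gamma> - 1, so every fibre is
a level set of the sine: two points if 0 < F(\<tau>) < 2\<gamma>, the single point \<pi>/2 if F(\<tau>) = 2\<gamma>,
none if F(\<tau>) > 2\<gamma>, and the single point 3\<pi>/2 at \<tau> = 1, where F vanishes. Everything
therefore reduces to the shape of F on (0,1]. It is positive on (0,1); for p(\<delta>) > 0 it tends
to 0 at 0 and is unimodal with maximum M_F(\<delta>), so the level 2\<gamma> is crossed twice or never,
while for p(\<delta>) < 0 it decreases from +\<infinity> and crosses every positive level once. Each crossing
of 2\<gamma> is a fold point at s = \<pi>/2, sub- or supercritical according to the direction of the
crossing, and F(\<tau>) \<rightarrow> 0 forces sin s \<rightarrow> -1 on the fibres as \<tau> \<rightarrow> 0+.\<close>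

section \<open>Level sets of the sine\<close>

lemma sin_eq_iff_arcsin:
  fixes c s :: real
  assumes "-1 \<le> c" "c \<le> 1" "-(pi/2) \<le> s" "s \<le> 3*pi/2"
  shows "sin s = c \<longleftrightarrow> s = arcsin c \<or> s = pi - arcsin c"
proof
  assume "sin s = c"
  show "s = arcsin c \<or> s = pi - arcsin c"
  proof (cases "s \<le> pi/2")
    case True
    then have "arcsin (sin s) = s" using assms by (intro arcsin_sin) auto
    with \<open>sin s = c\<close> show ?thesis by auto
  next
    case False
    then have "arcsin (sin (pi - s)) = pi - s" using assms by (intro arcsin_sin) auto
    with \<open>sin s = c\<close> show ?thesis by auto
  qed
qed (use assms in auto)

lemma sin_level_set_0_2pi:
  fixes c :: real
  assumes "-1 \<le> c" "c \<le> 1"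
  shows "{s\<in>{0..<2*pi}. sin s = c} =
           {s \<in> {arcsin c, pi - arcsin c, arcsin c + 2*pi}. 0 \<le> s \<and> s < 2*pi}"
proof (intro set_eqI iffI)
  fix s assume s: "s \<in> {s\<in>{0..<2*pi}. sin s = c}"
  show "s \<in> {s \<in> {arcsin c, pi - arcsin c, arcsin c + 2*pi}. 0 \<le> s \<and> s < 2*pi}"
  proof (cases "s \<le> 3*pi/2")
    case True
    then show ?thesis using sin_eq_iff_arcsin[OF assms, of s] s by auto
  next
    case False
    have "sin (s - 2*pi) = c" using s by (simp add: sin_diff)
    then have "s - 2*pi = arcsin c \<or> s - 2*pi = pi - arcsin c"
      using sin_eq_iff_arcsin[OF assms, of "s - 2*pi"] s False by auto
    then show ?thesis using arcsin_bounded[OF assms] s by auto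
  qed
qed (use assms in \<open>auto simp: sin_add\<close>)

lemma card_sin_level_set_0_2pi:
  fixes c :: real
  assumes "-1 < c" "c < 1"
  shows "card {s\<in>{0..<2*pi}. sin s = c} = 2"
proof -
  have bounds: "-(pi/2) < arcsin c" "arcsin c < pi/2" using arcsin_lt_bounded[OF assms] by auto
  show ?thesis
  proof (cases "0 \<le> c")
    case True
    then have "0 \<le> arcsin c" using arcsin_le_arcsin[of 0 c] assms by auto
    then have "{s \<in> {arcsin c, pi - arcsin c, arcsin c + 2*pi}. 0 \<le> s \<and> s < 2*pi} =
                 {arcsin c, pi - arcsin c}"
      using bounds pi_gt_zero by auto
    then show ?thesis using sin_level_set_0_2pi[of c] assms bounds by auto
  next
    case False
    then have "arcsin c < 0" using arcsin_less_arcsin[of c 0] assms by auto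
    then have "{s \<in> {arcsin c, pi - arcsin c, arcsin c + 2*pi}. 0 \<le> s \<and> s < 2*pi} =
                 {pi - arcsin c, arcsin c + 2*pi}"
      using bounds pi_gt_zero by auto
    then show ?thesis using sin_level_set_0_2pi[of c] assms bounds by auto
  qed
qed

lemma sin_level_set_0_2pi_1: "{s\<in>{0..<2*pi}. sin s = 1} = {pi/2}"
proof -
  have "s = pi/2" if "s \<in> {s\<in>{0..<2*pi}. sin s = 1}" for s
  proof -
    have "-1 \<le> (1::real)" by simp
    from that[unfolded sin_level_set_0_2pi[OF this order_refl]]
    have "s = arcsin 1 \<or> s = pi - arcsin 1 \<or> s = arcsin 1 + 2*pi" "s < 2*pi" by blast+
    then show ?thesis unfolding arcsin_1 using pi_gt_zero by (elim disjE) linarith+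
  qed
  then show ?thesis using pi_gt_zero by auto
qed

lemma sin_level_set_0_2pi_minus_1: "{s\<in>{0..<2*pi}. sin s = -1} = {3*pi/2}"
proof -
  have "s = 3*pi/2" if "s \<in> {s\<in>{0..<2*pi}. sin s = -1}" for s
  proof -
    have "-1 \<le> (1::real)" by simp
    from that[unfolded sin_level_set_0_2pi[OF order_refl this]]
    have "s = arcsin (-1) \<or> s = pi - arcsin (-1) \<or> s = arcsin (-1) + 2*pi" "0 \<le> s" by blast+
    then show ?thesis unfolding arcsin_minus_1 using pi_gt_zero by (elim disjE) linarith+
  qed
  moreover have "sin (3*pi/2) = -1" using sin_3over2_pi by (simp add: field_simps)
  ultimately show ?thesis using pi_gt_zero by auto
qed

lemma sin_level_set_near_pi_half:
  fixes c :: real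
  assumes "-1 \<le> c" "c \<le> 1"
  shows "{s. \<bar>s - pi/2\<bar> < pi \<and> sin s = c} = {s \<in> {arcsin c, pi - arcsin c}. \<bar>s - pi/2\<bar> < pi}"
proof (intro set_eqI iffI)
  fix s assume "s \<in> {s. \<bar>s - pi/2\<bar> < pi \<and> sin s = c}"
  then show "s \<in> {s \<in> {arcsin c, pi - arcsin c}. \<bar>s - pi/2\<bar> < pi}"
    using sin_eq_iff_arcsin[OF assms, of s] by auto
qed (use assms in auto)

lemma card_sin_level_set_near_pi_half:
  fixes c :: real
  assumes "-1 < c" "c < 1"
  shows "card {s. \<bar>s - pi/2\<bar> < pi \<and> sin s = c} = 2"
proof -
  have "-(pi/2) < arcsin c" "arcsin c < pi/2" using arcsin_lt_bounded[OF assms] by auto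
  then have "{s \<in> {arcsin c, pi - arcsin c}. \<bar>s - pi/2\<bar> < pi} = {arcsin c, pi - arcsin c}"
    by auto
  with \<open>arcsin c < pi/2\<close> show ?thesis using sin_level_set_near_pi_half[of c] assms by auto
qed

lemma sin_level_set_near_pi_half_1: "{s. \<bar>s - pi/2\<bar> < pi \<and> sin s = 1} = {pi/2}"
proof -
  have "pi/2 \<in> {s. \<bar>s - pi/2\<bar> < pi \<and> sin s = 1}" by (simp add: pi_gt_zero)
  moreover have "s = pi/2" if "s \<in> {s. \<bar>s - pi/2\<bar> < pi \<and> sin s = 1}" for s
    using that sin_eq_iff_arcsin[of 1 s] by auto
  ultimately show ?thesis by blast
qed

lemma dist_3pi2_less_if_sin_less:
  fixes s e :: real
  assumes "0 \<le> s" "s < 2*pi" "0 < e" "e \<le> pi/2" "sin s < - cos e"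
  shows "\<bar>s - 3*pi/2\<bar> < e"
proof (rule ccontr)
  define t where "t = s - 3*pi/2"
  have cos_3pi2: "cos (3*pi/2) = 0" and sin_3pi2: "sin (3*pi/2) = -1"
    using cos_3over2_pi sin_3over2_pi by (simp_all add: field_simps)
  have "sin s = sin t * cos (3*pi/2) + cos t * sin (3*pi/2)"
    unfolding t_def using sin_add[of "s - 3*pi/2" "3*pi/2"] by simp
  then have "sin s = - cos t" unfolding cos_3pi2 sin_3pi2 by simp
  assume "\<not> \<bar>s - 3*pi/2\<bar> < e"
  then have "e \<le> \<bar>t\<bar>" unfolding t_def by simp
  have "cos t \<le> cos e"
  proof (cases "\<bar>t\<bar> \<le> pi")
    case True
    then have "cos \<bar>t\<bar> \<le> cos e" using assms \<open>e \<le> \<bar>t\<bar>\<close> by (intro cos_monotone_0_pi_le) auto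
    then show ?thesis by simp
  next
    case False
    then have "0 \<le> cos (t + pi)" unfolding t_def using assms by (intro cos_ge_zero) auto
    moreover have "0 \<le> cos e" using assms by (intro cos_ge_zero) auto
    ultimately show ?thesis by simp
  qed
  then show False using assms(5) \<open>sin s = - cos t\<close> by linarith
qed

section \<open>The function F\<close>

lemma p_exp_factor: "p_exp \<delta> = (Phi - \<delta>) * (\<delta> - (1 - sqrt 5)/2)"
proof -
  have "sqrt 5 * sqrt 5 = (5::real)" by simp
  then show ?thesis unfolding p_exp_def Phi_def by (simp add: field_simps power2_eq_square)
qed

lemma p_exp_pos_iff: "\<delta> > 1 \<Longrightarrow> p_exp \<delta> > 0 \<longleftrightarrow> \<delta> < Phi"
  and p_exp_neg_iff: "\<delta> > 1 \<Longrightarrow> p_exp \<delta> < 0 \<longleftrightarrow> \<delta> > Phi"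
proof -
  assume "\<delta> > 1"
  moreover have "sqrt 5 > 0" by simp
  ultimately have "1 < \<delta> * 2 + sqrt 5" by linarith
  then have "\<delta> - (1 - sqrt 5)/2 > 0" by (simp add: field_simps)
  then show "p_exp \<delta> > 0 \<longleftrightarrow> \<delta> < Phi" "p_exp \<delta> < 0 \<longleftrightarrow> \<delta> > Phi"
    unfolding p_exp_factor by (simp_all add: zero_less_mult_iff mult_less_0_iff)
qed

lemma p_exp_less: "\<delta> > 1 \<Longrightarrow> p_exp \<delta> < \<delta>"
  unfolding p_exp_def by (simp add: power2_eq_square less_1_mult)

lemma F_fun_1 [simp]: "F_fun \<delta> 1 = 0"
  unfolding F_fun_def by simp

lemma F_fun_pos:
  assumes "\<delta> > 1" "0 < \<tau>" "\<tau> < 1"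
  shows "F_fun \<delta> \<tau> > 0"
  using powr_less_mono'[of \<tau> "p_exp \<delta>" \<delta>] p_exp_less[OF assms(1)] assms
  unfolding F_fun_def by simp

lemma F_fun_le_powr: "F_fun \<delta> \<tau> \<le> \<tau> powr p_exp \<delta>"
  unfolding F_fun_def by simp

lemma continuous_on_F_fun: "0 < a \<Longrightarrow> continuous_on {a..b} (F_fun \<delta>)"
  unfolding F_fun_def by (intro continuous_intros) auto

lemma F_fun_small_near_0:
  assumes "p_exp \<delta> > 0" "K > 0"
  obtains \<eta> where "\<eta> > 0" "\<And>\<tau>. 0 < \<tau> \<Longrightarrow> \<tau> < \<eta> \<Longrightarrow> F_fun \<delta> \<tau> < K"
proof
  show "K powr (1 / p_exp \<delta>) > 0" using assms by simp
  fix \<tau> assume "0 < \<tau>" "\<tau> < K powr (1 / p_exp \<delta>)"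
  then have "\<tau> powr p_exp \<delta> < (K powr (1 / p_exp \<delta>)) powr p_exp \<delta>"
    using assms by (intro powr_less_mono2) auto
  also have "\<dots> = K" using assms by (simp add: powr_powr)
  finally show "F_fun \<delta> \<tau> < K" using F_fun_le_powr[of \<delta> \<tau>] by linarith
qed

lemma F_fun_large_near_0:
  assumes "p_exp \<delta> < 0" "\<delta> > 0" "K > 0"
  obtains t where "0 < t" "t < 1" "K < F_fun \<delta> t"
proof
  define t where "t = (K + 1) powr (1 / p_exp \<delta>)"
  show "0 < t" unfolding t_def using assms by simp
  have "(K + 1) powr (1 / p_exp \<delta>) < (K + 1) powr 0"
    using assms by (intro powr_less_mono) (auto simp: divide_neg_pos)
  then show "t < 1" unfolding t_def using assms by simp
  have "t powr p_exp \<delta> = K + 1" unfolding t_def using assms by (simp add: powr_powr)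
  moreover have "t powr \<delta> < 1 powr \<delta>"
    using \<open>0 < t\<close> \<open>t < 1\<close> assms by (intro powr_less_mono2) auto
  ultimately show "K < F_fun \<delta> t" unfolding F_fun_def by simp
qed

lemma F_fun_strict_antimono:
  assumes "p_exp \<delta> < 0" "\<delta> > 0" "0 < x" "x < y"
  shows "F_fun \<delta> y < F_fun \<delta> x"
proof -
  have "y powr p_exp \<delta> < x powr p_exp \<delta>" using assms by (intro powr_less_mono2_neg) auto
  moreover have "x powr \<delta> < y powr \<delta>" using assms by (intro powr_less_mono2) auto
  ultimately show ?thesis unfolding F_fun_def by simp
qed

lemma F_fun_has_real_derivative:
  assumes "x > 0"
  shows "(F_fun \<delta> has_real_derivative
           x powr (p_exp \<delta> - 1) * (p_exp \<delta> - \<delta> * x powr (\<delta> - p_exp \<delta>))) (at x)"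
proof -
  have "x powr (\<delta> - 1) = x powr (p_exp \<delta> - 1) * x powr (\<delta> - p_exp \<delta>)"
    using assms by (simp add: powr_add[symmetric])
  moreover have "(F_fun \<delta> has_real_derivative
                   p_exp \<delta> * x powr (p_exp \<delta> - 1) - \<delta> * x powr (\<delta> - 1)) (at x)"
    unfolding F_fun_def[abs_def] using assms by (intro DERIV_diff has_real_derivative_powr) auto
  ultimately show ?thesis by (simp add: algebra_simps)
qed

text \<open>The point where the factor p - \<delta> \<tau>^(\<delta>-p) of F'(\<tau>) vanishes.\<close>
definition F_peak :: "real \<Rightarrow> real" where
  "F_peak \<delta> = (p_exp \<delta> / \<delta>) powr (1 / (\<delta> - p_exp \<delta>))"

context
  fixes \<delta> :: real
  assumes one_less: "\<delta> > 1" and p_exp_pos: "p_exp \<delta> > 0"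
begin

private lemma peak_exponent_pos: "\<delta> - p_exp \<delta> > 0"
  using p_exp_less[OF one_less] by simp

private lemma peak_base: "0 < p_exp \<delta> / \<delta>" "p_exp \<delta> / \<delta> < 1"
  using p_exp_pos one_less p_exp_less[OF one_less] by auto

lemma F_peak_pos: "F_peak \<delta> > 0"
  unfolding F_peak_def using peak_base p_exp_pos one_less by simp

lemma F_peak_less_1: "F_peak \<delta> < 1"
proof -
  have "(p_exp \<delta> / \<delta>) powr (1 / (\<delta> - p_exp \<delta>)) < 1 powr (1 / (\<delta> - p_exp \<delta>))"
    using peak_base peak_exponent_pos by (intro powr_less_mono2) auto
  then show ?thesis unfolding F_peak_def by simp
qed

lemma F_peak_powr: "F_peak \<delta> powr (\<delta> - p_exp \<delta>) = p_exp \<delta> / \<delta>"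
  unfolding F_peak_def using peak_base peak_exponent_pos p_exp_pos one_less
  by (simp add: powr_powr abs_of_pos)

lemma F_fun_derivative_sign:
  assumes "0 < x"
  shows "x < F_peak \<delta> \<Longrightarrow> p_exp \<delta> - \<delta> * x powr (\<delta> - p_exp \<delta>) > 0"
    and "F_peak \<delta> < x \<Longrightarrow> p_exp \<delta> - \<delta> * x powr (\<delta> - p_exp \<delta>) < 0"
proof -
  assume "x < F_peak \<delta>"
  then have "x powr (\<delta> - p_exp \<delta>) < p_exp \<delta> / \<delta>"
    using assms peak_exponent_pos F_peak_powr by (metis powr_less_mono2 less_eq_real_def)
  then show "p_exp \<delta> - \<delta> * x powr (\<delta> - p_exp \<delta>) > 0" using one_less by (simp add: field_simps)
next
  assume "F_peak \<delta> < x"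
  then have "p_exp \<delta> / \<delta> < x powr (\<delta> - p_exp \<delta>)"
    using F_peak_pos peak_exponent_pos F_peak_powr by (metis powr_less_mono2 less_eq_real_def)
  then show "p_exp \<delta> - \<delta> * x powr (\<delta> - p_exp \<delta>) < 0" using one_less by (simp add: field_simps)
qed

lemma F_fun_strict_mono_before_peak:
  assumes "0 < x" "x < y" "y \<le> F_peak \<delta>"
  shows "F_fun \<delta> x < F_fun \<delta> y"
proof (rule DERIV_pos_imp_increasing_open[OF assms(2)])
  fix z assume "x < z" "z < y"
  then show "\<exists>d. DERIV (F_fun \<delta>) z :> d \<and> d > 0"
    using assms F_fun_has_real_derivative[of z \<delta>] F_fun_derivative_sign(1)[of z] by force
qed (use assms continuous_on_F_fun in auto)

lemma F_fun_strict_antimono_after_peak: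
  assumes "F_peak \<delta> \<le> x" "x < y"
  shows "F_fun \<delta> y < F_fun \<delta> x"
proof (rule DERIV_neg_imp_decreasing_open[OF assms(2)])
  fix z assume "x < z" "z < y"
  then show "\<exists>d. DERIV (F_fun \<delta>) z :> d \<and> d < 0"
    using assms F_peak_pos F_fun_has_real_derivative[of z \<delta>] F_fun_derivative_sign(2)[of z]
    by (force intro: mult_pos_neg)
qed (use assms F_peak_pos continuous_on_F_fun in auto)

lemma F_fun_le_F_peak: "0 < x \<Longrightarrow> F_fun \<delta> x \<le> F_fun \<delta> (F_peak \<delta>)"
  using F_fun_strict_mono_before_peak[of x "F_peak \<delta>"] F_fun_strict_antimono_after_peak[of "F_peak \<delta>" x]
  by (cases "x < F_peak \<delta>") (auto simp: not_less less_eq_real_def)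

lemma M_F_eq_F_peak: "M_F \<delta> = F_fun \<delta> (F_peak \<delta>)"
  unfolding M_F_def
  using F_peak_pos F_peak_less_1 F_fun_le_F_peak by (intro cSup_eq_maximum) auto

end

lemma F_fun_level_crossings:
  assumes "\<delta> > 1" "p_exp \<delta> > 0" "0 < c" "c < M_F \<delta>"
  obtains a b where "0 < a" "a < b" "b < 1" "F_fun \<delta> a = c" "F_fun \<delta> b = c"
    "\<And>\<tau>. 0 < \<tau> \<Longrightarrow> \<tau> < a \<Longrightarrow> F_fun \<delta> \<tau> < c"
    "\<And>\<tau>. a < \<tau> \<Longrightarrow> \<tau> < b \<Longrightarrow> c < F_fun \<delta> \<tau>"
    "\<And>\<tau>. b < \<tau> \<Longrightarrow> F_fun \<delta> \<tau> < c"
proof -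
  let ?t = "F_peak \<delta>"
  have peak: "0 < ?t" "?t < 1" "c < F_fun \<delta> ?t"
    using assms F_peak_pos F_peak_less_1 M_F_eq_F_peak by auto
  obtain \<eta> where "\<eta> > 0" and small: "\<And>\<tau>. 0 < \<tau> \<Longrightarrow> \<tau> < \<eta> \<Longrightarrow> F_fun \<delta> \<tau> < c"
    using F_fun_small_near_0[OF assms(2,3)] by blast
  define t1 where "t1 = min (?t/2) (\<eta>/2)"
  have t1: "0 < t1" "t1 < ?t" "F_fun \<delta> t1 < c"
    unfolding t1_def using peak \<open>\<eta> > 0\<close> small by auto
  obtain a where a: "t1 \<le> a" "a \<le> ?t" "F_fun \<delta> a = c"
    using IVT'[of "F_fun \<delta>" t1 c ?t] t1 peak continuous_on_F_fun[of t1 ?t \<delta>] by auto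
  obtain b where b: "?t \<le> b" "b \<le> 1" "F_fun \<delta> b = c"
    using IVT2'[of "F_fun \<delta>" 1 c ?t] peak assms(3) continuous_on_F_fun[of ?t 1 \<delta>] by auto
  have order: "0 < a" "a < ?t" "?t < b" "b < 1"
    using a b t1 peak assms(3) by (auto simp: less_eq_real_def)
  show thesis
  proof (rule that)
    show "F_fun \<delta> \<tau> < c" if "0 < \<tau>" "\<tau> < a" for \<tau>
      using F_fun_strict_mono_before_peak[OF assms(1,2) that a(2)] a by simp
    show "c < F_fun \<delta> \<tau>" if "a < \<tau>" "\<tau> < b" for \<tau>
    proof (cases "\<tau> \<le> ?t")
      case True
      then show ?thesis using F_fun_strict_mono_before_peak[OF assms(1,2), of a \<tau>] a that \<open>0 < a\<close> by auto
    next
      case False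
      then show ?thesis using F_fun_strict_antimono_after_peak[OF assms(1,2), of \<tau> b] b that by auto
    qed
    show "F_fun \<delta> \<tau> < c" if "b < \<tau>" for \<tau>
      using F_fun_strict_antimono_after_peak[OF assms(1,2), of b \<tau>] b that by auto
  qed (use a b order in auto)
qed

lemma F_fun_level_crossing_decreasing:
  assumes "\<delta> > 0" "p_exp \<delta> < 0" "0 < c"
  obtains t0 where "0 < t0" "t0 < 1" "F_fun \<delta> t0 = c"
    "\<And>\<tau>. 0 < \<tau> \<Longrightarrow> \<tau> < t0 \<Longrightarrow> c < F_fun \<delta> \<tau>"
    "\<And>\<tau>. t0 < \<tau> \<Longrightarrow> F_fun \<delta> \<tau> < c"
proof -
  obtain t1 where t1: "0 < t1" "t1 < 1" "c < F_fun \<delta> t1"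
    using F_fun_large_near_0[OF assms(2,1,3)] by blast
  obtain t0 where t0: "t1 \<le> t0" "t0 \<le> 1" "F_fun \<delta> t0 = c"
    using IVT2'[of "F_fun \<delta>" 1 c t1] t1 assms(3) continuous_on_F_fun[of t1 1 \<delta>] by auto
  have "0 < t0" "t0 < 1" using t0 t1 assms(3) by (auto simp: less_eq_real_def)
  with t0 show thesis
    using that[of t0] F_fun_strict_antimono[OF assms(2,1)] by force
qed

section \<open>Fibres of the zero set\<close>

lemma g_fun_eq_0_iff:
  assumes "0 < \<tau>"
  shows "g_fun \<delta> \<gamma> k \<tau> s = 0 \<longleftrightarrow> \<gamma> * (1 + k * sin s) = F_fun \<delta> \<tau>"
proof -
  have "\<tau> powr (\<delta>^2) = \<tau> powr (\<delta>^2 - \<delta>) * \<tau> powr \<delta>"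
    and "\<tau> = \<tau> powr (\<delta>^2 - \<delta>) * \<tau> powr (p_exp \<delta>)"
    using assms unfolding p_exp_def by (simp_all add: powr_add[symmetric])
  then have "g_fun \<delta> \<gamma> k \<tau> s =
               \<tau> powr (\<delta>^2 - \<delta>) * (\<gamma> * (1 + k * sin s) - F_fun \<delta> \<tau>)"
    unfolding g_fun_def F_fun_def by (simp add: algebra_simps)
  then show ?thesis using assms by simp
qed

lemma fibre_eq_sin_level_set:
  assumes "0 < \<tau>" "\<tau> \<le> 1" "\<gamma> > 0"
  shows "fibre \<delta> \<gamma> 1 \<tau> = {s\<in>{0..<2*pi}. sin s = F_fun \<delta> \<tau> / \<gamma> - 1}"
  unfolding fibre_def using g_fun_eq_0_iff[OF assms(1)] assms by (auto simp: field_simps)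

lemma card_fibre_eq_2:
  assumes "\<delta> > 1" "\<gamma> > 0" "0 < \<tau>" "\<tau> < 1" "F_fun \<delta> \<tau> < 2*\<gamma>"
  shows "card (fibre \<delta> \<gamma> 1 \<tau>) = 2"
proof -
  have "-1 < F_fun \<delta> \<tau> / \<gamma> - 1" "F_fun \<delta> \<tau> / \<gamma> - 1 < 1"
    using assms F_fun_pos[of \<delta> \<tau>] by (auto simp: field_simps)
  then show ?thesis using fibre_eq_sin_level_set assms card_sin_level_set_0_2pi by simp
qed

lemma fibre_eq_pi_half:
  assumes "\<gamma> > 0" "0 < \<tau>" "\<tau> \<le> 1" "F_fun \<delta> \<tau> = 2*\<gamma>"
  shows "fibre \<delta> \<gamma> 1 \<tau> = {pi/2}"
  using fibre_eq_sin_level_set sin_level_set_0_2pi_1 assms by simp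

lemma fibre_eq_empty:
  assumes "\<gamma> > 0" "0 < \<tau>" "\<tau> \<le> 1" "2*\<gamma> < F_fun \<delta> \<tau>"
  shows "fibre \<delta> \<gamma> 1 \<tau> = {}"
proof -
  have "F_fun \<delta> \<tau> / \<gamma> - 1 > 1" using assms by (simp add: field_simps)
  then have "sin s \<noteq> F_fun \<delta> \<tau> / \<gamma> - 1" for s using sin_le_one[of s] by linarith
  then show ?thesis using fibre_eq_sin_level_set[of \<tau> \<gamma> \<delta>] assms by auto
qed

lemma fibre_at_1: "\<gamma> > 0 \<Longrightarrow> fibre \<delta> \<gamma> 1 1 = {3*pi/2}"
  using fibre_eq_sin_level_set[of 1] sin_level_set_0_2pi_minus_1 by simp

lemma conv_to_3pi2_if_p_exp_pos:
  assumes "p_exp \<delta> > 0" "\<gamma> > 0"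
  shows "conv_to_3pi2 \<delta> \<gamma> 1"
  unfolding conv_to_3pi2_def
proof (intro allI impI)
  fix \<epsilon> :: real assume "\<epsilon> > 0"
  define e where "e = min \<epsilon> (pi/2)"
  have e: "0 < e" "e \<le> \<epsilon>" "e \<le> pi/2" unfolding e_def using \<open>\<epsilon> > 0\<close> by auto
  have "cos e < 1" using cos_monotone_0_pi[of 0 e] e by simp
  then obtain \<eta> where "\<eta> > 0" and small: "\<And>\<tau>. 0 < \<tau> \<Longrightarrow> \<tau> < \<eta> \<Longrightarrow> F_fun \<delta> \<tau> < \<gamma> * (1 - cos e)"
    using F_fun_small_near_0[OF assms(1), of "\<gamma> * (1 - cos e)"] assms(2) by auto
  have "\<bar>s - 3*pi/2\<bar> < \<epsilon>" if "0 < \<tau>" "\<tau> < \<eta>" "s \<in> fibre \<delta> \<gamma> 1 \<tau>" for \<tau> s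
  proof -
    have "0 \<le> s" "s < 2*pi" "sin s = F_fun \<delta> \<tau> / \<gamma> - 1"
      using that fibre_eq_sin_level_set[of \<tau> \<gamma> \<delta>] assms by (auto simp: fibre_def)
    moreover have "F_fun \<delta> \<tau> / \<gamma> < 1 - cos e"
      using small[OF that(1,2)] assms(2) by (simp add: field_simps)
    ultimately show ?thesis using dist_3pi2_less_if_sin_less[of s e] e by simp
  qed
  then show "\<exists>\<eta>>0. \<forall>\<tau> s. 0 < \<tau> \<and> \<tau> < \<eta> \<and> s \<in> fibre \<delta> \<gamma> 1 \<tau> \<longrightarrow> \<bar>s - 3*pi/2\<bar> < \<epsilon>"
    using \<open>\<eta> > 0\<close> by blast
qed

section \<open>Fold points\<close>

lemma fold_point_if_cos_eq_0:
  assumes "0 < \<tau>" "\<tau> \<le> 1" "g_fun \<delta> \<gamma> k \<tau> s0 = 0" "cos s0 = 0"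
  shows "fold_point \<delta> \<gamma> k \<tau> s0"
proof -
  have "((\<lambda>s. g_fun \<delta> \<gamma> k \<tau> s) has_real_derivative \<gamma> * \<tau> powr (\<delta>^2 - \<delta>) * (k * cos s0)) (at s0)"
    unfolding g_fun_def by (auto intro!: derivative_eq_intros)
  then show ?thesis unfolding fold_point_def using assms by (simp add: DERIV_imp_deriv)
qed

definition pi_half_strip :: "(real \<times> real) set" where
  "pi_half_strip = {z. \<bar>snd z - pi/2\<bar> < pi}"

lemma local_zeros_pi_half_strip:
  assumes "\<gamma> > 0" "0 < \<tau>" "\<tau> \<le> 1"
  shows "local_zeros \<delta> \<gamma> 1 pi_half_strip \<tau> =
           {s. \<bar>s - pi/2\<bar> < pi \<and> sin s = F_fun \<delta> \<tau> / \<gamma> - 1}"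
  unfolding local_zeros_def pi_half_strip_def using g_fun_eq_0_iff[OF assms(2)] assms
  by (auto simp: field_simps)

lemma card_local_zeros_eq_2:
  assumes "\<delta> > 1" "\<gamma> > 0" "0 < \<tau>" "\<tau> < 1" "F_fun \<delta> \<tau> < 2*\<gamma>"
  shows "card (local_zeros \<delta> \<gamma> 1 pi_half_strip \<tau>) = 2"
proof -
  have "-1 < F_fun \<delta> \<tau> / \<gamma> - 1" "F_fun \<delta> \<tau> / \<gamma> - 1 < 1"
    using assms F_fun_pos[of \<delta> \<tau>] by (auto simp: field_simps)
  then show ?thesis using local_zeros_pi_half_strip assms card_sin_level_set_near_pi_half by simp
qed

lemma local_zeros_eq_empty:
  assumes "\<gamma> > 0" "0 < \<tau>" "\<tau> \<le> 1" "2*\<gamma> < F_fun \<delta> \<tau>"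
  shows "local_zeros \<delta> \<gamma> 1 pi_half_strip \<tau> = {}"
proof -
  have "F_fun \<delta> \<tau> / \<gamma> - 1 > 1" using assms by (simp add: field_simps)
  then have "sin s \<noteq> F_fun \<delta> \<tau> / \<gamma> - 1" for s using sin_le_one[of s] by linarith
  then show ?thesis using local_zeros_pi_half_strip[of \<gamma> \<tau> \<delta>] assms by auto
qed

lemma fold_point_at_level_2\<gamma>:
  assumes "\<gamma> > 0" "0 < t0" "t0 \<le> 1" "F_fun \<delta> t0 = 2*\<gamma>"
  shows "fold_point \<delta> \<gamma> 1 t0 (pi/2)"
    and "card (local_zeros \<delta> \<gamma> 1 pi_half_strip t0) = 1"
proof -
  show "fold_point \<delta> \<gamma> 1 t0 (pi/2)"
    using assms g_fun_eq_0_iff[of t0 \<delta> \<gamma> 1 "pi/2"] by (intro fold_point_if_cos_eq_0) auto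
  show "card (local_zeros \<delta> \<gamma> 1 pi_half_strip t0) = 1"
    using local_zeros_pi_half_strip[of \<gamma> t0 \<delta>] sin_level_set_near_pi_half_1 assms by simp
qed

lemma supercritical_at_downcrossing:
  assumes "\<delta> > 1" "\<gamma> > 0" "0 \<le> a" "a < t0" "t0 < b" "b \<le> 1" "F_fun \<delta> t0 = 2*\<gamma>"
    and "\<And>\<tau>. a < \<tau> \<Longrightarrow> \<tau> < t0 \<Longrightarrow> 2*\<gamma> < F_fun \<delta> \<tau>"
    and "\<And>\<tau>. t0 < \<tau> \<Longrightarrow> \<tau> < b \<Longrightarrow> F_fun \<delta> \<tau> < 2*\<gamma>"
  shows "supercritical \<delta> \<gamma> 1 t0 (pi/2)"
  unfolding supercritical_def
proof (intro conjI exI[of _ pi_half_strip] exI[of _ "min (t0 - a) (b - t0)"] allI impI)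
  show "open pi_half_strip"
    unfolding pi_half_strip_def by (intro open_Collect_less continuous_intros)
  fix \<tau> assume "t0 < \<tau> \<and> \<tau> < t0 + min (t0 - a) (b - t0)"
  then show "card (local_zeros \<delta> \<gamma> 1 pi_half_strip \<tau>) = 2"
    using assms by (intro card_local_zeros_eq_2) auto
next
  fix \<tau> assume "t0 - min (t0 - a) (b - t0) < \<tau> \<and> \<tau> < t0"
  then show "local_zeros \<delta> \<gamma> 1 pi_half_strip \<tau> = {}"
    using assms by (intro local_zeros_eq_empty) auto
qed (use assms fold_point_at_level_2\<gamma> in \<open>auto simp: pi_half_strip_def\<close>)

lemma subcritical_at_upcrossing:
  assumes "\<delta> > 1" "\<gamma> > 0" "0 \<le> a" "a < t0" "t0 < b" "b \<le> 1" "F_fun \<delta> t0 = 2*\<gamma>"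
    and "\<And>\<tau>. a < \<tau> \<Longrightarrow> \<tau> < t0 \<Longrightarrow> F_fun \<delta> \<tau> < 2*\<gamma>"
    and "\<And>\<tau>. t0 < \<tau> \<Longrightarrow> \<tau> < b \<Longrightarrow> 2*\<gamma> < F_fun \<delta> \<tau>"
  shows "subcritical \<delta> \<gamma> 1 t0 (pi/2)"
  unfolding subcritical_def
proof (intro conjI exI[of _ pi_half_strip] exI[of _ "min (t0 - a) (b - t0)"] allI impI)
  show "open pi_half_strip"
    unfolding pi_half_strip_def by (intro open_Collect_less continuous_intros)
  fix \<tau> assume "t0 - min (t0 - a) (b - t0) < \<tau> \<and> \<tau> < t0"
  then show "card (local_zeros \<delta> \<gamma> 1 pi_half_strip \<tau>) = 2"
    using assms by (intro card_local_zeros_eq_2) auto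
next
  fix \<tau> assume "t0 < \<tau> \<and> \<tau> < t0 + min (t0 - a) (b - t0)"
  then show "local_zeros \<delta> \<gamma> 1 pi_half_strip \<tau> = {}"
    using assms by (intro local_zeros_eq_empty) auto
qed (use assms fold_point_at_level_2\<gamma> in \<open>auto simp: pi_half_strip_def\<close>)

section \<open>The three regimes\<close>

lemma fibres_without_folds:
  assumes "\<gamma> > 0" "\<delta> > 1" "\<delta> < Phi" "\<gamma> > M_F \<delta> / 2"
  shows "(\<forall>\<tau>. 0 < \<tau> \<and> \<tau> < 1 \<longrightarrow> card (fibre \<delta> \<gamma> 1 \<tau>) = 2) \<and>
         fibre \<delta> \<gamma> 1 1 = {3*pi/2} \<and> conv_to_3pi2 \<delta> \<gamma> 1"
proof -
  have p: "p_exp \<delta> > 0" using p_exp_pos_iff assms by simp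
  have "F_fun \<delta> \<tau> < 2*\<gamma>" if "0 < \<tau>" for \<tau>
    using F_fun_le_F_peak[OF assms(2) p that] M_F_eq_F_peak[OF assms(2) p] assms(4) by simp
  then show ?thesis using assms p card_fibre_eq_2 fibre_at_1 conv_to_3pi2_if_p_exp_pos by auto
qed

lemma fibres_with_two_folds:
  assumes "\<gamma> > 0" "\<delta> > 1" "\<delta> < Phi" "\<gamma> < M_F \<delta> / 2"
  shows "\<exists>a b. 0 < a \<and> a < b \<and> b < 1 \<and>
          (\<forall>\<tau>. (0 < \<tau> \<and> \<tau> < a) \<or> (b < \<tau> \<and> \<tau> < 1) \<longrightarrow> card (fibre \<delta> \<gamma> 1 \<tau>) = 2) \<and>
          fibre \<delta> \<gamma> 1 a = {pi/2} \<and> fibre \<delta> \<gamma> 1 b = {pi/2} \<and>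
          (\<forall>\<tau>. a < \<tau> \<and> \<tau> < b \<longrightarrow> fibre \<delta> \<gamma> 1 \<tau> = {}) \<and>
          fibre \<delta> \<gamma> 1 1 = {3*pi/2} \<and>
          subcritical \<delta> \<gamma> 1 a (pi/2) \<and> supercritical \<delta> \<gamma> 1 b (pi/2) \<and>
          conv_to_3pi2 \<delta> \<gamma> 1"
proof -
  have p: "p_exp \<delta> > 0" using p_exp_pos_iff assms by simp
  obtain a b where ab: "0 < a" "a < b" "b < 1" "F_fun \<delta> a = 2*\<gamma>" "F_fun \<delta> b = 2*\<gamma>"
    and before_a: "\<And>\<tau>. 0 < \<tau> \<Longrightarrow> \<tau> < a \<Longrightarrow> F_fun \<delta> \<tau> < 2*\<gamma>"
    and between: "\<And>\<tau>. a < \<tau> \<Longrightarrow> \<tau> < b \<Longrightarrow> 2*\<gamma> < F_fun \<delta> \<tau>"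
    and after_b: "\<And>\<tau>. b < \<tau> \<Longrightarrow> F_fun \<delta> \<tau> < 2*\<gamma>"
    using F_fun_level_crossings[OF assms(2) p, of "2*\<gamma>"] assms(1,4) by auto
  have "card (fibre \<delta> \<gamma> 1 \<tau>) = 2" if "(0 < \<tau> \<and> \<tau> < a) \<or> (b < \<tau> \<and> \<tau> < 1)" for \<tau>
    using that ab before_a after_b assms by (intro card_fibre_eq_2) auto
  moreover have "fibre \<delta> \<gamma> 1 \<tau> = {}" if "a < \<tau> \<and> \<tau> < b" for \<tau>
    using that ab between assms by (intro fibre_eq_empty) auto
  moreover have "subcritical \<delta> \<gamma> 1 a (pi/2)"
    using ab before_a between assms by (intro subcritical_at_upcrossing[where a = 0 and b = b]) auto
  moreover have "supercritical \<delta> \<gamma> 1 b (pi/2)"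
    using ab between after_b assms by (intro supercritical_at_downcrossing[where a = a and b = 1]) auto
  moreover have "fibre \<delta> \<gamma> 1 a = {pi/2}" using ab assms by (intro fibre_eq_pi_half) auto
  moreover have "fibre \<delta> \<gamma> 1 b = {pi/2}" using ab assms by (intro fibre_eq_pi_half) auto
  ultimately show ?thesis
    using ab assms p fibre_at_1 conv_to_3pi2_if_p_exp_pos by blast
qed

lemma fibres_with_one_fold:
  assumes "\<gamma> > 0" "\<delta> > 1" "\<delta> > Phi"
  shows "\<exists>\<tau>0. 0 < \<tau>0 \<and> \<tau>0 < 1 \<and>
          (\<forall>\<tau>. 0 < \<tau> \<and> \<tau> < \<tau>0 \<longrightarrow> fibre \<delta> \<gamma> 1 \<tau> = {}) \<and>
          fibre \<delta> \<gamma> 1 \<tau>0 = {pi/2} \<and>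
          (\<forall>\<tau>. \<tau>0 < \<tau> \<and> \<tau> < 1 \<longrightarrow> card (fibre \<delta> \<gamma> 1 \<tau>) = 2) \<and>
          fibre \<delta> \<gamma> 1 1 = {3*pi/2} \<and>
          supercritical \<delta> \<gamma> 1 \<tau>0 (pi/2) \<and> fold_point \<delta> \<gamma> 1 1 (3*pi/2)"
proof -
  have p: "p_exp \<delta> < 0" using p_exp_neg_iff assms by simp
  obtain t0 where t0: "0 < t0" "t0 < 1" "F_fun \<delta> t0 = 2*\<gamma>"
    and before_t0: "\<And>\<tau>. 0 < \<tau> \<Longrightarrow> \<tau> < t0 \<Longrightarrow> 2*\<gamma> < F_fun \<delta> \<tau>"
    and after_t0: "\<And>\<tau>. t0 < \<tau> \<Longrightarrow> F_fun \<delta> \<tau> < 2*\<gamma>"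
    using F_fun_level_crossing_decreasing[OF _ p, of "2*\<gamma>"] assms by auto
  have "g_fun \<delta> \<gamma> 1 1 (3*pi/2) = 0"
    using g_fun_eq_0_iff[of 1 \<delta> \<gamma> 1 "3*pi/2"] sin_3over2_pi by (simp add: field_simps)
  then have "fold_point \<delta> \<gamma> 1 1 (3*pi/2)"
    using cos_3over2_pi by (intro fold_point_if_cos_eq_0) (auto simp: field_simps)
  moreover have "supercritical \<delta> \<gamma> 1 t0 (pi/2)"
    using t0 before_t0 after_t0 assms by (intro supercritical_at_downcrossing[where a = 0 and b = 1]) auto
  moreover have "fibre \<delta> \<gamma> 1 \<tau> = {}" if "0 < \<tau> \<and> \<tau> < t0" for \<tau>
    using that t0 before_t0 assms by (intro fibre_eq_empty) auto
  moreover have "card (fibre \<delta> \<gamma> 1 \<tau>) = 2" if "t0 < \<tau> \<and> \<tau> < 1" for \<tau>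
    using that t0 after_t0 assms by (intro card_fibre_eq_2) auto
  moreover have "fibre \<delta> \<gamma> 1 t0 = {pi/2}" using t0 assms by (intro fibre_eq_pi_half) auto
  ultimately show ?thesis using t0 assms fibre_at_1 by blast
qed

theorem mainTheorem4:
  fixes \<delta> \<gamma> :: real
  assumes "\<gamma> > 0" and "\<delta> > 1"
  shows
   "(\<delta> < Phi \<and> \<gamma> > M_F \<delta> / 2 \<longrightarrow>
       (\<forall>\<tau>. 0 < \<tau> \<and> \<tau> < 1 \<longrightarrow> card (fibre \<delta> \<gamma> 1 \<tau>) = 2) \<and>
       fibre \<delta> \<gamma> 1 1 = {3*pi/2} \<and>
       conv_to_3pi2 \<delta> \<gamma> 1)
  \<and> (\<delta> < Phi \<and> \<gamma> < M_F \<delta> / 2 \<longrightarrow>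
       (\<exists>a b. 0 < a \<and> a < b \<and> b < 1 \<and>
          (\<forall>\<tau>. (0 < \<tau> \<and> \<tau> < a) \<or> (b < \<tau> \<and> \<tau> < 1) \<longrightarrow> card (fibre \<delta> \<gamma> 1 \<tau>) = 2) \<and>
          fibre \<delta> \<gamma> 1 a = {pi/2} \<and> fibre \<delta> \<gamma> 1 b = {pi/2} \<and>
          (\<forall>\<tau>. a < \<tau> \<and> \<tau> < b \<longrightarrow> fibre \<delta> \<gamma> 1 \<tau> = {}) \<and>
          fibre \<delta> \<gamma> 1 1 = {3*pi/2} \<and>
          subcritical \<delta> \<gamma> 1 a (pi/2) \<and> supercritical \<delta> \<gamma> 1 b (pi/2) \<and>
          conv_to_3pi2 \<delta> \<gamma> 1))
  \<and> (\<delta> > Phi \<longrightarrow>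
       (\<exists>\<tau>0. 0 < \<tau>0 \<and> \<tau>0 < 1 \<and>
          (\<forall>\<tau>. 0 < \<tau> \<and> \<tau> < \<tau>0 \<longrightarrow> fibre \<delta> \<gamma> 1 \<tau> = {}) \<and>
          fibre \<delta> \<gamma> 1 \<tau>0 = {pi/2} \<and>
          (\<forall>\<tau>. \<tau>0 < \<tau> \<and> \<tau> < 1 \<longrightarrow> card (fibre \<delta> \<gamma> 1 \<tau>) = 2) \<and>
          fibre \<delta> \<gamma> 1 1 = {3*pi/2} \<and>
          supercritical \<delta> \<gamma> 1 \<tau>0 (pi/2) \<and> fold_point \<delta> \<gamma> 1 1 (3*pi/2)))"
  using fibres_without_folds[OF assms] fibres_with_two_folds[OF assms] fibres_with_one_fold[OF assms]
  by blast

end
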